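(* Let $S>0$ and $K>0$ be fixed with $K\neq S$, let $x:=\ln(K/S)$, and for a maturity $T>0$ let $C(T,K)$ be a European call price (zero interest rate) with implied lognormal volatility $\sigma_{LN}$, i.e. $C(T,K)=\mathrm{BS}(S,K,T,\sigma_{LN})$ where $\mathrm{BS}(S,K,T,\sigma)=S\,\mathcal N(d_+)-K\,\mathcal N(d_-)$, $d_\pm=\frac{\ln(S/K)\pm\sigma^2T/2}{\sigma\sqrt T}$, $\mathcal N$ the standard normal distribution function. (Case 1: short expiry) Let $\mathrm{TV}:=C(T,K)-(S-K)_+$, $\lambda:=-1/\ln(\mathrm{TV}/S)$, $\gamma:=\ln\!\big(4\sqrt\pi\,e^{-x/2}/|x|\big)$, $\alpha_1:=-\tfrac32-\tfrac{x^2}{16}$. Then, as $T\to0$ (in the regime $\sigma_{LN}\sqrt T\to0$), $\sigma_{LN}^2T=\frac{x^2}{2}\,v$ with $$v=\lambda-\tfrac32\lambda^2\ln\lambda+\gamma\lambda^2+\tfrac94\lambda^3\ln^2\lambda+\big(\tfrac94-3\gamma\big)\lambda^3\ln\lambda+\big(\gamma^2-\tfrac32\gamma-\alpha_1\big)\lambda^3+o(\lambda^3).$$ (Case 2: large expiry) Let $\mathrm{CC}:=S-C(T,K)$, $\lambda:=-1/\ln(\mathrm{CC}/S)$, $\gamma:=\ln\!\big(\sqrt\pi\,e^{-x/2}\big)$, $\alpha_1:=-\tfrac12-\tfrac{x^2}{16}$. Then, as $T\to+\infty$ (in the regime $\sigma_{LN}\sqrt T\to+\infty$), $$\sigma_{LN}^2T=\frac8\lambda\Big[1+\tfrac12\lambda\ln\lambda-\gamma\lambda-\tfrac14\lambda^2\ln\lambda+\big(\tfrac\gamma2+\alpha_1\big)\lambda^2+o(\lambda^2)\Big].$$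 In particular, as $T\to+\infty$, $\sigma_{LN}\sim2\sqrt{-2\ln(\mathrm{CC}/S)/T}$. *)

theory Defs
  imports "HOL-Probability.Distributions" "HOL-Library.Landau_Symbols"
begin

definition Ncdf :: "real \<Rightarrow> real" where
  "Ncdf y = (LBINT t:{..y}. std_normal_density t)"

definition BS :: "real \<Rightarrow> real \<Rightarrow> real \<Rightarrow> real \<Rightarrow> real" where
  "BS S K T \<sigma> =
     S * Ncdf ((ln (S / K) + \<sigma>\<^sup>2 * T / 2) / (\<sigma> * sqrt T))
   - K * Ncdf ((ln (S / K) - \<sigma>\<^sup>2 * T / 2) / (\<sigma> * sqrt T))"

end

theory Submission
  imports Defs "HOL-Real_Asymp.Real_Asymp"
begin

text \<open>
  Write \<open>x = ln (K / S)\<close> and \<open>s = \<sigma> \<surd>T\<close>, and let \<open>R = (1 - \<Phi>) / \<phi>\<close> be the Mills ratio.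
  Up to the common factor \<open>exp (x/2 - x\<^sup>2/(2 s\<^sup>2) - s\<^sup>2/8) / \<surd>(2\<pi>)\<close>, the normalized time value
  \<open>TV / S\<close> equals \<open>R (\<bar>x\<bar>/s - s/2) - R (\<bar>x\<bar>/s + s/2)\<close> and \<open>CC / S\<close> equals
  \<open>R (s/2 - x/s) + R (s/2 + x/s)\<close>. The truncations of the asymptotic series
  \<open>R z \<sim> 1/z - 1/z\<^sup>3 + 3/z\<^sup>5 - 15/z\<^sup>7\<close> bound \<open>R\<close> alternately from below and above, and this
  suffices for
  \<open>- ln (TV / S) = 1/v - 3/2 ln v + \<gamma> - \<alpha>\<^sub>1 v + O(v\<^sup>2)\<close> with \<open>v = 2 s\<^sup>2 / x\<^sup>2\<close> as \<open>s \<rightarrow> 0\<close>, and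
  \<open>- ln (CC / S) = w + 1/2 ln w + \<gamma> - \<alpha>\<^sub>1 / w + O(1/w\<^sup>2)\<close> with \<open>w = s\<^sup>2 / 8\<close> as \<open>s \<rightarrow> \<infinity>\<close>.
  The expansions of \<open>\<sigma>\<^sup>2 T\<close> are the inverses of these relations. The unknown \<open>O\<close>-term does not
  spoil the inversion because the truncated inverse series is monotone near \<open>0\<close>: \<open>\<lambda>\<close> lies between
  the values obtained for the constant perturbations \<open>\<plusminus>C v\<^sup>2\<close> (resp. \<open>\<plusminus>C / w\<^sup>2\<close>), for which
  the inversion is an explicit asymptotic computation.
\<close>

section \<open>The standard normal distribution function\<close>

lemma std_normal_density_pos: "std_normal_density z > 0"
  by (simp add: normal_density_pos)

lemma DERIV_std_normal_density: "DERIV std_normal_density z :> - z * std_normal_density z"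
  unfolding std_normal_density_def
  by (auto intro!: derivative_eq_intros simp: field_simps power2_eq_square)

lemma std_normal_density_minus: "std_normal_density (- z) = std_normal_density z"
  by (simp add: std_normal_density_def)

lemma set_integrable_std_normal_density:
  "A \<in> sets lborel \<Longrightarrow> set_integrable lborel A std_normal_density"
  unfolding set_integrable_def by (intro integrable_mult_indicator) auto

lemma Ncdf_split:
  assumes "a \<le> y"
  shows "Ncdf y = (LINT t:{..<a}|lborel. std_normal_density t) + integral {a..y} std_normal_density"
proof -
  have "{..y} = {..<a} \<union> {a..y}" using assms by auto
  hence "Ncdf y = (LINT t:{..<a} \<union> {a..y}|lborel. std_normal_density t)" by (simp add: Ncdf_def)
  also have "\<dots> = (LINT t:{..<a}|lborel. std_normal_density t) + (LINT t:{a..y}|lborel. std_normal_density t)"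
    by (rule set_integral_Un) (auto intro: set_integrable_std_normal_density)
  also have "(LINT t:{a..y}|lborel. std_normal_density t) = integral {a..y} std_normal_density"
    by (rule set_borel_integral_eq_integral) (auto intro: set_integrable_std_normal_density)
  finally show ?thesis .
qed

lemma DERIV_Ncdf: "DERIV Ncdf y :> std_normal_density y"
proof -
  have "continuous_on {y - 1..y + 1} std_normal_density"
    unfolding std_normal_density_def by (intro continuous_intros) auto
  hence "((\<lambda>u. (LINT t:{..<y - 1}|lborel. std_normal_density t) + integral {y - 1..u} std_normal_density)
      has_real_derivative std_normal_density y) (at y within {y - 1..y + 1})"
    by (auto intro!: derivative_eq_intros integral_has_real_derivative)
  hence "(Ncdf has_real_derivative std_normal_density y) (at y within {y - 1..y + 1})"
    by (rule has_field_derivative_transform_within[where d = 1]) (auto simp: Ncdf_split)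
  thus ?thesis by (simp add: at_within_Icc_at)
qed

lemma Ncdf_at_bot: "(Ncdf \<longlongrightarrow> 0) at_bot"
proof -
  let ?I = "\<lambda>A. LINT t:A|lborel. std_normal_density t"
  have "((\<lambda>a. ?I {..0} - ?I {a..0}) \<longlongrightarrow> ?I {..0} - ?I {..0}) at_bot"
    by (intro tendsto_diff tendsto_const tendsto_set_lebesgue_integral_at_bot)
       (auto intro: set_integrable_std_normal_density)
  moreover have "\<forall>\<^sub>F a in at_bot. ?I {..0} - ?I {a..0} = Ncdf a"
  proof (rule eventually_at_bot_linorderI[of 0])
    fix a :: real assume "a \<le> 0"
    hence "?I {..0} = ?I {..<a} + ?I {a..0}"
      using Ncdf_split[of a 0] set_borel_integral_eq_integral(2)[OF set_integrable_std_normal_density]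
      by (simp add: Ncdf_def)
    thus "?I {..0} - ?I {a..0} = Ncdf a" using Ncdf_split[of a a] by simp
  qed
  ultimately show ?thesis by (simp add: tendsto_cong)
qed

lemma Ncdf_at_top: "(Ncdf \<longlongrightarrow> 1) at_top"
proof -
  let ?I = "\<lambda>A. LINT t:A|lborel. std_normal_density t"
  have "?I {..<0} + ?I {0..} = ?I ({..<0} \<union> {0..})"
    by (rule set_integral_Un[symmetric]) (auto intro: set_integrable_std_normal_density)
  also have "{..<0} \<union> {0..} = (UNIV :: real set)" by auto
  also have "?I UNIV = 1" by (simp add: set_lebesgue_integral_def)
  finally have total: "?I {..<0} + ?I {0..} = 1" .
  have "((\<lambda>b. ?I {..<0} + ?I {0..b}) \<longlongrightarrow> ?I {..<0} + ?I {0..}) at_top"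
    by (intro tendsto_add tendsto_const tendsto_set_lebesgue_integral_at_top)
       (auto intro: set_integrable_std_normal_density)
  moreover have "\<forall>\<^sub>F b in at_top. ?I {..<0} + ?I {0..b} = Ncdf b"
    by (rule eventually_at_top_linorderI[of 0])
       (simp add: Ncdf_split set_borel_integral_eq_integral(2)[OF set_integrable_std_normal_density])
  ultimately show ?thesis by (simp add: tendsto_cong total)
qed

lemma Ncdf_minus: "Ncdf (- y) = 1 - Ncdf y"
proof -
  let ?F = "\<lambda>z. Ncdf z + Ncdf (- z)"
  have "DERIV (\<lambda>z. Ncdf (- z)) z :> std_normal_density (- z) * (- 1)" for z
    by (rule DERIV_chain2[OF DERIV_Ncdf]) (auto intro!: derivative_eq_intros)
  hence "DERIV ?F z :> std_normal_density z + std_normal_density (- z) * (- 1)" for z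
    by (intro DERIV_add DERIV_Ncdf)
  hence "\<forall>z. DERIV ?F z :> 0" by (simp add: std_normal_density_def)
  hence F: "?F = (\<lambda>_. ?F y)" using DERIV_isconst_all by blast
  have "(?F \<longlongrightarrow> 1 + 0) at_top"
    by (intro tendsto_add Ncdf_at_top filterlim_compose[OF Ncdf_at_bot] filterlim_uminus_at_bot_at_top)
  hence "?F y = 1" unfolding F by (simp add: tendsto_const_iff)
  thus ?thesis by simp
qed

section \<open>The Mills ratio\<close>

definition mills :: "real \<Rightarrow> real" where
  "mills z = Ncdf (- z) / std_normal_density z"

lemma Ncdf_minus_eq_mills: "Ncdf (- z) = std_normal_density z * mills z"
  using std_normal_density_pos[of z] by (simp add: mills_def)

lemma nonneg_if_DERIV_nonpos_tendsto_0:
  fixes g g' :: "real \<Rightarrow> real"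
  assumes "\<And>z. z > 0 \<Longrightarrow> DERIV g z :> g' z" "\<And>z. z > 0 \<Longrightarrow> g' z \<le> 0"
    and "(g \<longlongrightarrow> 0) at_top" and "z > 0"
  shows "g z \<ge> 0"
proof (rule tendsto_upperbound[OF assms(3) _ trivial_limit_at_top_linorder])
  show "\<forall>\<^sub>F w in at_top. g w \<le> g z"
  proof (rule eventually_at_top_linorderI[of z])
    fix w assume "z \<le> w"
    thus "g w \<le> g z"
    proof (rule DERIV_nonpos_imp_nonincreasing)
      fix y assume "z \<le> y"
      with assms(4) have "y > 0" by linarith
      with assms(1,2) show "\<exists>d. DERIV g y :> d \<and> d \<le> 0" by blast
    qed
  qed
qed

text \<open>The sign of \<open>P' - z P + 1\<close> decides whether \<open>P\<close> bounds the Mills ratio from above or below: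
  \<open>\<phi> P - Ncdf (- z)\<close> has derivative \<open>\<phi> (P' - z P + 1)\<close> and vanishes at infinity.\<close>

lemma DERIV_tail_comparison:
  assumes "DERIV P z :> P'"
  shows "DERIV (\<lambda>z. std_normal_density z * P z - Ncdf (- z)) z
           :> std_normal_density z * (P' - z * P z + 1)"
proof -
  have "DERIV (\<lambda>z. Ncdf (- z)) z :> std_normal_density (- z) * (- 1)"
    by (rule DERIV_chain2[OF DERIV_Ncdf]) (auto intro!: derivative_eq_intros)
  from DERIV_diff[OF DERIV_mult[OF DERIV_std_normal_density assms] this] show ?thesis
    by (simp add: std_normal_density_minus algebra_simps)
qed

lemma mills_le:
  assumes "\<And>z. z > 0 \<Longrightarrow> DERIV P z :> P' z" "\<And>z. z > 0 \<Longrightarrow> P' z - z * P z + 1 \<le> 0"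
    and "((\<lambda>z. std_normal_density z * P z) \<longlongrightarrow> 0) at_top" and "z > 0"
  shows "mills z \<le> P z"
proof -
  have "std_normal_density z * P z - Ncdf (- z) \<ge> 0"
  proof (rule nonneg_if_DERIV_nonpos_tendsto_0
      [where g = "\<lambda>z. std_normal_density z * P z - Ncdf (- z)"])
    show "DERIV (\<lambda>z. std_normal_density z * P z - Ncdf (- z)) w
            :> std_normal_density w * (P' w - w * P w + 1)" if "w > 0" for w
      using assms(1)[OF that] by (rule DERIV_tail_comparison)
    show "std_normal_density w * (P' w - w * P w + 1) \<le> 0" if "w > 0" for w
      using assms(2)[OF that] std_normal_density_pos[of w] by (simp add: mult_nonneg_nonpos)
    show "((\<lambda>z. std_normal_density z * P z - Ncdf (- z)) \<longlongrightarrow> 0) at_top"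
      using tendsto_diff[OF assms(3) filterlim_compose[OF Ncdf_at_bot filterlim_uminus_at_bot_at_top]]
      by simp
  qed (fact assms(4))
  thus ?thesis using std_normal_density_pos[of z] by (simp add: Ncdf_minus_eq_mills)
qed

lemma mills_ge:
  assumes "\<And>z. z > 0 \<Longrightarrow> DERIV P z :> P' z" "\<And>z. z > 0 \<Longrightarrow> P' z - z * P z + 1 \<ge> 0"
    and "((\<lambda>z. std_normal_density z * P z) \<longlongrightarrow> 0) at_top" and "z > 0"
  shows "P z \<le> mills z"
proof -
  have "- (std_normal_density z * P z - Ncdf (- z)) \<ge> 0"
  proof (rule nonneg_if_DERIV_nonpos_tendsto_0
      [where g = "\<lambda>z. - (std_normal_density z * P z - Ncdf (- z))"])
    show "DERIV (\<lambda>z. - (std_normal_density z * P z - Ncdf (- z))) w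
            :> - (std_normal_density w * (P' w - w * P w + 1))" if "w > 0" for w
      using DERIV_tail_comparison[OF assms(1)[OF that]] by (rule DERIV_minus)
    show "- (std_normal_density w * (P' w - w * P w + 1)) \<le> 0" if "w > 0" for w
      using assms(2)[OF that] std_normal_density_pos[of w] by simp
    show "((\<lambda>z. - (std_normal_density z * P z - Ncdf (- z))) \<longlongrightarrow> 0) at_top"
      using tendsto_minus[OF tendsto_diff[OF assms(3)
          filterlim_compose[OF Ncdf_at_bot filterlim_uminus_at_bot_at_top]]]
      by simp
  qed (fact assms(4))
  thus ?thesis using std_normal_density_pos[of z] by (simp add: Ncdf_minus_eq_mills)
qed

definition mills_approx2 :: "real \<Rightarrow> real" where
  "mills_approx2 z = 1 / z - 1 / z ^ 3"

definition mills_approx3 :: "real \<Rightarrow> real" where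
  "mills_approx3 z = 1 / z - 1 / z ^ 3 + 3 / z ^ 5"

definition mills_approx4 :: "real \<Rightarrow> real" where
  "mills_approx4 z = 1 / z - 1 / z ^ 3 + 3 / z ^ 5 - 15 / z ^ 7"

lemma mills_le_approx3: "z > 0 \<Longrightarrow> mills z \<le> mills_approx3 z"
proof (rule mills_le[where P' = "\<lambda>z. - 1 / z ^ 2 + 3 / z ^ 4 - 15 / z ^ 6"])
  fix z :: real assume "z > 0"
  thus "DERIV mills_approx3 z :> - 1 / z ^ 2 + 3 / z ^ 4 - 15 / z ^ 6"
    unfolding mills_approx3_def by (auto intro!: derivative_eq_intros simp: field_simps eval_nat_numeral)
  show "- 1 / z ^ 2 + 3 / z ^ 4 - 15 / z ^ 6 - z * mills_approx3 z + 1 \<le> 0"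
    using \<open>z > 0\<close> by (simp add: mills_approx3_def field_simps eval_nat_numeral)
next
  show "((\<lambda>z. std_normal_density z * mills_approx3 z) \<longlongrightarrow> 0) at_top"
    unfolding std_normal_density_def mills_approx3_def by real_asymp
qed

lemma mills_approx2_le: "z > 0 \<Longrightarrow> mills_approx2 z \<le> mills z"
proof (rule mills_ge[where P' = "\<lambda>z. - 1 / z ^ 2 + 3 / z ^ 4"])
  fix z :: real assume "z > 0"
  thus "DERIV mills_approx2 z :> - 1 / z ^ 2 + 3 / z ^ 4"
    unfolding mills_approx2_def by (auto intro!: derivative_eq_intros simp: field_simps eval_nat_numeral)
  show "- 1 / z ^ 2 + 3 / z ^ 4 - z * mills_approx2 z + 1 \<ge> 0"
    using \<open>z > 0\<close> by (simp add: mills_approx2_def field_simps eval_nat_numeral)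
next
  show "((\<lambda>z. std_normal_density z * mills_approx2 z) \<longlongrightarrow> 0) at_top"
    unfolding std_normal_density_def mills_approx2_def by real_asymp
qed

lemma mills_approx4_le: "z > 0 \<Longrightarrow> mills_approx4 z \<le> mills z"
proof (rule mills_ge[where P' = "\<lambda>z. - 1 / z ^ 2 + 3 / z ^ 4 - 15 / z ^ 6 + 105 / z ^ 8"])
  fix z :: real assume "z > 0"
  thus "DERIV mills_approx4 z :> - 1 / z ^ 2 + 3 / z ^ 4 - 15 / z ^ 6 + 105 / z ^ 8"
    unfolding mills_approx4_def by (auto intro!: derivative_eq_intros simp: field_simps eval_nat_numeral)
  show "- 1 / z ^ 2 + 3 / z ^ 4 - 15 / z ^ 6 + 105 / z ^ 8 - z * mills_approx4 z + 1 \<ge> 0"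
    using \<open>z > 0\<close> by (simp add: mills_approx4_def field_simps eval_nat_numeral)
next
  show "((\<lambda>z. std_normal_density z * mills_approx4 z) \<longlongrightarrow> 0) at_top"
    unfolding std_normal_density_def mills_approx4_def by real_asymp
qed

section \<open>Inverting the asymptotic relations\<close>

lemma bigo_sandwich:
  fixes f l u g :: "'a \<Rightarrow> real"
  assumes "\<forall>\<^sub>F w in F. l w \<le> f w \<and> f w \<le> u w" "l \<in> O[F](g)" "u \<in> O[F](g)"
  shows "f \<in> O[F](g)"
proof -
  have "(\<lambda>w. f w - l w) \<in> O[F](\<lambda>w. u w - l w)"
    using assms(1) by (intro landau_o.big_mono) (auto elim!: eventually_mono)
  also have "(\<lambda>w. u w - l w) \<in> O[F](g)" using assms(3,2) by (rule sum_in_bigo(2))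
  finally have "(\<lambda>w. (f w - l w) + l w) \<in> O[F](g)" using assms(2) by (rule sum_in_bigo)
  thus ?thesis by simp
qed

lemma smallo_sandwich:
  fixes f l u g :: "'a \<Rightarrow> real"
  assumes "\<forall>\<^sub>F w in F. l w \<le> f w \<and> f w \<le> u w" "l \<in> o[F](g)" "u \<in> o[F](g)"
  shows "f \<in> o[F](g)"
proof -
  have "(\<lambda>w. f w - l w) \<in> O[F](\<lambda>w. u w - l w)"
    using assms(1) by (intro landau_o.big_mono) (auto elim!: eventually_mono)
  also have "(\<lambda>w. u w - l w) \<in> o[F](g)" using assms(3,2) by (rule sum_in_smallo(2))
  finally have "(\<lambda>w. (f w - l w) + l w) \<in> o[F](g)" using assms(2) by (rule sum_in_smallo)
  thus ?thesis by simp
qed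

text \<open>An \<open>O(e)\<close> perturbation \<open>E\<close> of the denominator lies between the perturbations \<open>\<plusminus>C e\<close>,
  and monotonicity of \<open>F w\<close> near \<open>0\<close> carries the estimate for these over to \<open>E\<close>.\<close>

lemma smallo_perturbed_reciprocal:
  fixes F :: "'a \<Rightarrow> real \<Rightarrow> real" and d e E g :: "'a \<Rightarrow> real"
  assumes mono: "\<forall>\<^sub>F w in L. mono_on {0<..<\<delta>} (F w)" and "\<delta> > 0"
    and small: "\<And>c. (\<lambda>w. F w (1 / (d w + c * e w))) \<in> o[L](g)"
    and lim: "\<And>c. filterlim (\<lambda>w. 1 / (d w + c * e w)) (at_right 0) L"
    and e_nonneg: "\<forall>\<^sub>F w in L. e w \<ge> 0" and E: "E \<in> O[L](e)"
  shows "(\<lambda>w. F w (1 / (d w + E w))) \<in> o[L](g)"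
proof -
  obtain C where "C > 0" and C: "\<forall>\<^sub>F w in L. \<bar>E w\<bar> \<le> C * \<bar>e w\<bar>"
    using E by (elim landau_o.bigE) simp
  have "\<forall>\<^sub>F l in at_right 0. l \<in> {0<..<\<delta>}"
    unfolding eventually_at_right_field using \<open>\<delta> > 0\<close> by auto
  hence near_0: "\<forall>\<^sub>F w in L. 1 / (d w + c * e w) \<in> {0<..<\<delta>}" for c
    using lim by (rule eventually_compose_filterlim)
  have "\<forall>\<^sub>F w in L. F w (1 / (d w + C * e w)) \<le> F w (1 / (d w + E w))
                    \<and> F w (1 / (d w + E w)) \<le> F w (1 / (d w + (- C) * e w))"
    using mono near_0[of C] near_0[of "- C"] C e_nonneg
  proof eventually_elim
    case (elim w)
    let ?lo = "1 / (d w + C * e w)" and ?hi = "1 / (d w + (- C) * e w)" and ?m = "1 / (d w + E w)"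
    have pos: "0 < d w + (- C) * e w"
      and bounds: "d w + (- C) * e w \<le> d w + E w" "d w + E w \<le> d w + C * e w"
      using elim(3,4,5) by (auto simp: abs_le_iff zero_less_divide_iff)
    hence "?lo \<le> ?m" "?m \<le> ?hi" by (simp_all add: frac_le)
    moreover from this have "?m \<in> {0<..<\<delta>}" using elim(3) pos bounds by auto
    ultimately show ?case using elim(1-3) by (blast intro: mono_onD)
  qed
  from smallo_sandwich[OF this small small] show ?thesis .
qed

lemma reciprocal_perturbed_asymp_equiv:
  fixes d u E :: "'a \<Rightarrow> real"
  assumes "d \<sim>[L] (\<lambda>w. 1 / u w)" and "E \<in> o[L](\<lambda>w. 1 / u w)"
  shows "(\<lambda>w. 1 / (d w + E w)) \<sim>[L] u"
proof -
  have "(\<lambda>w. d w + E w) \<sim>[L] (\<lambda>w. 1 / u w)"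
    using assms by (subst asymp_equiv_add_right)
  from asymp_equiv_inverse[OF this] show ?thesis by (simp add: inverse_eq_divide)
qed

lemma mono_on_near_0_if_DERIV_nonneg:
  fixes f f' :: "real \<Rightarrow> real"
  assumes "\<And>l. l > 0 \<Longrightarrow> DERIV f l :> f' l" and "\<forall>\<^sub>F l in at_right 0. f' l \<ge> 0"
  shows "\<exists>\<delta>>0. mono_on {0<..<\<delta>} f"
proof -
  obtain \<delta> where "\<delta> > 0" and \<delta>: "\<And>l. 0 < l \<Longrightarrow> l < \<delta> \<Longrightarrow> f' l \<ge> 0"
    using assms(2) by (auto simp: eventually_at_right_field)
  have "mono_on {0<..<\<delta>} f"
  proof (rule mono_onI)
    fix l1 l2 assume "l1 \<in> {0<..<\<delta>}" "l2 \<in> {0<..<\<delta>}" "l1 \<le> l2"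
    show "f l1 \<le> f l2"
    proof (rule DERIV_nonneg_imp_nondecreasing[OF \<open>l1 \<le> l2\<close>])
      fix l assume "l1 \<le> l" "l \<le> l2"
      with \<open>l1 \<in> {0<..<\<delta>}\<close> \<open>l2 \<in> {0<..<\<delta>}\<close> have "0 < l" "l < \<delta>" by auto
      with assms(1) \<delta> show "\<exists>y. DERIV f l :> y \<and> y \<ge> 0" by blast
    qed
  qed
  with \<open>\<delta> > 0\<close> show ?thesis by blast
qed

definition short_expiry_series :: "real \<Rightarrow> real \<Rightarrow> real \<Rightarrow> real" where
  "short_expiry_series \<gamma> \<alpha> l = l - 3 / 2 * l\<^sup>2 * ln l + \<gamma> * l\<^sup>2 + 9 / 4 * l ^ 3 * (ln l)\<^sup>2
     + (9 / 4 - 3 * \<gamma>) * l ^ 3 * ln l + (\<gamma>\<^sup>2 - 3 / 2 * \<gamma> - \<alpha>) * l ^ 3"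

definition long_expiry_series :: "real \<Rightarrow> real \<Rightarrow> real \<Rightarrow> real" where
  "long_expiry_series \<gamma> \<alpha> l = 1 + 1 / 2 * l * ln l - \<gamma> * l - 1 / 4 * l\<^sup>2 * ln l + (\<gamma> / 2 + \<alpha>) * l\<^sup>2"

lemma short_expiry_series_mono_near_0: "\<exists>\<delta>>0. mono_on {0<..<\<delta>} (short_expiry_series \<gamma> \<alpha>)"
proof (rule mono_on_near_0_if_DERIV_nonneg)
  let ?D = "\<lambda>l. 1 - 3 * l * ln l - 3 / 2 * l + 2 * \<gamma> * l + 27 / 4 * l\<^sup>2 * (ln l)\<^sup>2 + 9 / 2 * l\<^sup>2 * ln l
     + 3 * (9 / 4 - 3 * \<gamma>) * l\<^sup>2 * ln l + (9 / 4 - 3 * \<gamma>) * l\<^sup>2 + 3 * (\<gamma>\<^sup>2 - 3 / 2 * \<gamma> - \<alpha>) * l\<^sup>2"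
  show "DERIV (short_expiry_series \<gamma> \<alpha>) l :> ?D l" if "l > 0" for l
    unfolding short_expiry_series_def using that
    by (auto intro!: derivative_eq_intros simp: field_simps eval_nat_numeral)
  show "\<forall>\<^sub>F l in at_right 0. ?D l \<ge> 0" by real_asymp
qed

lemma linear_minus_long_expiry_series_mono_near_0: "\<exists>\<delta>>0. \<forall>w>0. mono_on {0<..<\<delta>} (\<lambda>l. w * l - long_expiry_series \<gamma> \<alpha> l)"
proof -
  let ?D = "\<lambda>l. - (1 / 2 * ln l + 1 / 2 - \<gamma> - 1 / 2 * l * ln l - 1 / 4 * l + (\<gamma> + 2 * \<alpha>) * l)"
  have "\<exists>\<delta>>0. mono_on {0<..<\<delta>} (\<lambda>l. - long_expiry_series \<gamma> \<alpha> l)"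
  proof (rule mono_on_near_0_if_DERIV_nonneg)
    show "DERIV (\<lambda>l. - long_expiry_series \<gamma> \<alpha> l) l :> ?D l" if "l > 0" for l
      unfolding long_expiry_series_def using that
      by (auto intro!: derivative_eq_intros simp: field_simps eval_nat_numeral)
    show "\<forall>\<^sub>F l in at_right 0. ?D l \<ge> 0" by real_asymp
  qed
  then obtain \<delta> where "\<delta> > 0" and mono: "mono_on {0<..<\<delta>} (\<lambda>l. - long_expiry_series \<gamma> \<alpha> l)"
    by blast
  have "mono_on {0<..<\<delta>} (\<lambda>l. w * l - long_expiry_series \<gamma> \<alpha> l)" if "w > 0" for w
    using mono_onD[OF mono] that by (intro mono_onI) (smt (verit) mult_left_mono)
  with \<open>\<delta> > 0\<close> show ?thesis by blast
qed

lemma short_expiry_series_inverts: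
  "(\<lambda>v. short_expiry_series \<gamma> \<alpha> (1 / (1 / v - 3 / 2 * ln v + \<gamma> - \<alpha> * v + c * v\<^sup>2)) - v)
     \<in> o[at_right 0](\<lambda>v. v ^ 3)"
  unfolding short_expiry_series_def
  by (real_asymp simp add: field_simps power2_eq_square power_numeral_reduce mult_ac)

lemma long_expiry_series_inverts:
  "(\<lambda>w. w * (1 / (w + 1 / 2 * ln w + \<gamma> - \<alpha> / w + c / w\<^sup>2))
        - long_expiry_series \<gamma> \<alpha> (1 / (w + 1 / 2 * ln w + \<gamma> - \<alpha> / w + c / w\<^sup>2)))
     \<in> o[at_top](\<lambda>w. 1 / w\<^sup>2)"
  unfolding long_expiry_series_def
  by (real_asymp simp add: field_simps power2_eq_square power_numeral_reduce mult_ac)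

lemma short_expiry_series_inverts_perturbed:
  fixes v E :: "'a \<Rightarrow> real" and \<gamma> \<alpha> :: real
  assumes v: "filterlim v (at_right 0) F" and E: "E \<in> O[F](\<lambda>s. (v s)\<^sup>2)"
  defines "lam \<equiv> \<lambda>s. 1 / (1 / v s - 3 / 2 * ln (v s) + \<gamma> - \<alpha> * v s + E s)"
  shows "(\<lambda>s. short_expiry_series \<gamma> \<alpha> (lam s) - v s) \<in> o[F](\<lambda>s. v s ^ 3)"
    and "lam \<sim>[F] v"
proof -
  obtain \<delta> where "\<delta> > 0" and mono: "mono_on {0<..<\<delta>} (short_expiry_series \<gamma> \<alpha>)"
    using short_expiry_series_mono_near_0 by blast
  show "(\<lambda>s. short_expiry_series \<gamma> \<alpha> (lam s) - v s) \<in> o[F](\<lambda>s. v s ^ 3)"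
    unfolding lam_def
  proof (rule smallo_perturbed_reciprocal[where e = "\<lambda>s. (v s)\<^sup>2"])
    show "\<forall>\<^sub>F s in F. mono_on {0<..<\<delta>} (\<lambda>l. short_expiry_series \<gamma> \<alpha> l - v s)"
      using mono by (auto simp: mono_on_def)
    show "(\<lambda>s. short_expiry_series \<gamma> \<alpha> (1 / (1 / v s - 3 / 2 * ln (v s) + \<gamma> - \<alpha> * v s + c * (v s)\<^sup>2))
            - v s) \<in> o[F](\<lambda>s. v s ^ 3)" for c
      by (rule landau_o.small.compose[OF short_expiry_series_inverts v])
    have "filterlim (\<lambda>v. 1 / (1 / v - 3 / 2 * ln v + \<gamma> - \<alpha> * v + c * v\<^sup>2)) (at_right 0) (at_right 0)"
      for c by real_asymp
    from filterlim_compose[OF this v]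
    show "filterlim (\<lambda>s. 1 / (1 / v s - 3 / 2 * ln (v s) + \<gamma> - \<alpha> * v s + c * (v s)\<^sup>2)) (at_right 0) F"
      for c .
  qed (use \<open>\<delta> > 0\<close> E in auto)
  have "(\<lambda>v. 1 / v - 3 / 2 * ln v + \<gamma> - \<alpha> * v) \<sim>[at_right 0] (\<lambda>v. 1 / v)"
    and "(\<lambda>v::real. v\<^sup>2) \<in> o[at_right 0](\<lambda>v. 1 / v)" by real_asymp+
  from asymp_equiv_compose'[OF this(1) v] landau_o.big_small_trans[OF E landau_o.small.compose[OF this(2) v]]
  show "lam \<sim>[F] v" unfolding lam_def by (rule reciprocal_perturbed_asymp_equiv)
qed

lemma long_expiry_series_inverts_perturbed:
  fixes w E :: "'a \<Rightarrow> real" and \<gamma> \<alpha> :: real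
  assumes w: "filterlim w at_top F" and E: "E \<in> O[F](\<lambda>s. 1 / (w s)\<^sup>2)"
  defines "lam \<equiv> \<lambda>s. 1 / (w s + 1 / 2 * ln (w s) + \<gamma> - \<alpha> / w s + E s)"
  shows "(\<lambda>s. w s * lam s - long_expiry_series \<gamma> \<alpha> (lam s)) \<in> o[F](\<lambda>s. 1 / (w s)\<^sup>2)"
    and "lam \<sim>[F] (\<lambda>s. 1 / w s)"
proof -
  obtain \<delta> where "\<delta> > 0" and mono: "\<forall>w>0. mono_on {0<..<\<delta>} (\<lambda>l. w * l - long_expiry_series \<gamma> \<alpha> l)"
    using linear_minus_long_expiry_series_mono_near_0 by blast
  show "(\<lambda>s. w s * lam s - long_expiry_series \<gamma> \<alpha> (lam s)) \<in> o[F](\<lambda>s. 1 / (w s)\<^sup>2)"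
    unfolding lam_def
  proof (rule smallo_perturbed_reciprocal[where e = "\<lambda>s. 1 / (w s)\<^sup>2"])
    show "\<forall>\<^sub>F s in F. mono_on {0<..<\<delta>} (\<lambda>l. w s * l - long_expiry_series \<gamma> \<alpha> l)"
      using filterlim_at_top_dense[THEN iffD1, OF w, rule_format, of 0] mono
      by (auto elim!: eventually_mono)
    show "(\<lambda>s. w s * (1 / (w s + 1 / 2 * ln (w s) + \<gamma> - \<alpha> / w s + c * (1 / (w s)\<^sup>2)))
            - long_expiry_series \<gamma> \<alpha> (1 / (w s + 1 / 2 * ln (w s) + \<gamma> - \<alpha> / w s + c * (1 / (w s)\<^sup>2))))
          \<in> o[F](\<lambda>s. 1 / (w s)\<^sup>2)" for c
      using landau_o.small.compose[OF long_expiry_series_inverts w] by simp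
    have "filterlim (\<lambda>w. 1 / (w + 1 / 2 * ln w + \<gamma> - \<alpha> / w + c * (1 / w\<^sup>2))) (at_right 0) at_top"
      for c by real_asymp
    from filterlim_compose[OF this w]
    show "filterlim (\<lambda>s. 1 / (w s + 1 / 2 * ln (w s) + \<gamma> - \<alpha> / w s + c * (1 / (w s)\<^sup>2))) (at_right 0) F"
      for c .
  qed (use \<open>\<delta> > 0\<close> E in auto)
  have "(\<lambda>w. w + 1 / 2 * ln w + \<gamma> - \<alpha> / w) \<sim>[at_top] (\<lambda>w. 1 / (1 / w))"
    and "(\<lambda>w::real. 1 / w\<^sup>2) \<in> o[at_top](\<lambda>w. 1 / (1 / w))" by real_asymp+
  from asymp_equiv_compose'[OF this(1) w] landau_o.big_small_trans[OF E landau_o.small.compose[OF this(2) w]]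
  show "lam \<sim>[F] (\<lambda>s. 1 / w s)" unfolding lam_def by (rule reciprocal_perturbed_asymp_equiv)
qed

section \<open>Black--Scholes prices through the Mills ratio\<close>

definition normalized_call :: "real \<Rightarrow> real \<Rightarrow> real" where
  "normalized_call x s = Ncdf (s / 2 - x / s) - exp x * Ncdf (- x / s - s / 2)"

lemma BS_div_spot:
  assumes "S > 0" "K > 0" "T \<ge> 0"
  shows "BS S K T \<sigma> / S = normalized_call (ln (K / S)) (\<sigma> * sqrt T)"
proof -
  define x where "x = ln (K / S)"
  define s where "s = \<sigma> * sqrt T"
  have "\<sigma>\<^sup>2 * T = s\<^sup>2" using assms(3) by (simp add: s_def power_mult_distrib)
  moreover have "ln (S / K) = - x" using assms(1,2) by (simp add: x_def ln_div)
  ultimately have BS: "BS S K T \<sigma> = S * Ncdf ((- x + s\<^sup>2 / 2) / s) - K * Ncdf ((- x - s\<^sup>2 / 2) / s)"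
    unfolding BS_def s_def[symmetric] by simp
  have d: "(- x + s\<^sup>2 / 2) / s = s / 2 - x / s" "(- x - s\<^sup>2 / 2) / s = - x / s - s / 2"
    by (cases "s = 0"; simp add: field_simps power2_eq_square)+
  have "K = S * exp x" using assms(1,2) by (simp add: x_def)
  hence "BS S K T \<sigma> / S = normalized_call x s"
    unfolding BS d using assms(1) by (simp add: normalized_call_def diff_divide_distrib)
  thus ?thesis by (simp add: x_def s_def)
qed

lemma std_normal_density_at_d:
  assumes "s \<noteq> 0"
  shows "z\<^sup>2 = (x / s - s / 2)\<^sup>2
           \<Longrightarrow> std_normal_density z = exp (x / 2 - x\<^sup>2 / (2 * s\<^sup>2) - s\<^sup>2 / 8) / sqrt (2 * pi)"
    and "z\<^sup>2 = (x / s + s / 2)\<^sup>2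
           \<Longrightarrow> exp x * std_normal_density z = exp (x / 2 - x\<^sup>2 / (2 * s\<^sup>2) - s\<^sup>2 / 8) / sqrt (2 * pi)"
proof -
  have "- (x / s - s / 2)\<^sup>2 / 2 = x / 2 - x\<^sup>2 / (2 * s\<^sup>2) - s\<^sup>2 / 8"
       "x + - (x / s + s / 2)\<^sup>2 / 2 = x / 2 - x\<^sup>2 / (2 * s\<^sup>2) - s\<^sup>2 / 8"
    using assms by (simp_all add: field_simps power2_eq_square)
  thus "z\<^sup>2 = (x / s - s / 2)\<^sup>2
          \<Longrightarrow> std_normal_density z = exp (x / 2 - x\<^sup>2 / (2 * s\<^sup>2) - s\<^sup>2 / 8) / sqrt (2 * pi)"
       "z\<^sup>2 = (x / s + s / 2)\<^sup>2
          \<Longrightarrow> exp x * std_normal_density z = exp (x / 2 - x\<^sup>2 / (2 * s\<^sup>2) - s\<^sup>2 / 8) / sqrt (2 * pi)"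
    by (simp_all add: std_normal_density_def flip: exp_add)
qed

lemma one_minus_normalized_call_eq:
  assumes "s \<noteq> 0"
  shows "1 - normalized_call x s = exp (x / 2 - x\<^sup>2 / (2 * s\<^sup>2) - s\<^sup>2 / 8) / sqrt (2 * pi)
           * (mills (s / 2 - x / s) + mills (s / 2 + x / s))"
proof -
  have "1 - normalized_call x s = Ncdf (- (s / 2 - x / s)) + exp x * Ncdf (- (s / 2 + x / s))"
    using Ncdf_minus[of "s / 2 - x / s"] by (simp add: normalized_call_def algebra_simps)
  also have "\<dots> = std_normal_density (s / 2 - x / s) * mills (s / 2 - x / s)
                  + (exp x * std_normal_density (s / 2 + x / s)) * mills (s / 2 + x / s)"
    by (simp only: Ncdf_minus_eq_mills mult.assoc)
  also have "std_normal_density (s / 2 - x / s) = exp (x / 2 - x\<^sup>2 / (2 * s\<^sup>2) - s\<^sup>2 / 8) / sqrt (2 * pi)"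
    by (rule std_normal_density_at_d(1)[OF assms]) (simp add: power2_commute)
  also have "exp x * std_normal_density (s / 2 + x / s) = exp (x / 2 - x\<^sup>2 / (2 * s\<^sup>2) - s\<^sup>2 / 8) / sqrt (2 * pi)"
    by (rule std_normal_density_at_d(2)[OF assms]) (simp add: add.commute)
  finally show ?thesis by (simp add: algebra_simps add_divide_distrib)
qed

lemma normalized_time_value_eq:
  assumes "s \<noteq> 0"
  shows "normalized_call x s - max (1 - exp x) 0
           = exp (x / 2 - x\<^sup>2 / (2 * s\<^sup>2) - s\<^sup>2 / 8) / sqrt (2 * pi)
             * (mills (\<bar>x\<bar> / s - s / 2) - mills (\<bar>x\<bar> / s + s / 2))"
proof (cases "x \<ge> 0")
  case True
  hence "normalized_call x s - max (1 - exp x) 0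
           = Ncdf (- (x / s - s / 2)) - exp x * Ncdf (- (x / s + s / 2))"
    by (simp add: normalized_call_def algebra_simps)
  also have "\<dots> = std_normal_density (x / s - s / 2) * mills (x / s - s / 2)
                  - (exp x * std_normal_density (x / s + s / 2)) * mills (x / s + s / 2)"
    by (simp only: Ncdf_minus_eq_mills mult.assoc)
  also have "std_normal_density (x / s - s / 2) = exp (x / 2 - x\<^sup>2 / (2 * s\<^sup>2) - s\<^sup>2 / 8) / sqrt (2 * pi)"
    by (rule std_normal_density_at_d(1)[OF assms]) simp
  also have "exp x * std_normal_density (x / s + s / 2) = exp (x / 2 - x\<^sup>2 / (2 * s\<^sup>2) - s\<^sup>2 / 8) / sqrt (2 * pi)"
    by (rule std_normal_density_at_d(2)[OF assms]) simp
  finally show ?thesis using True by (simp add: algebra_simps diff_divide_distrib)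
next
  case False
  hence "normalized_call x s - max (1 - exp x) 0
           = exp x * Ncdf (- (- x / s - s / 2)) - Ncdf (- (s / 2 - x / s))"
    by (simp only: Ncdf_minus) (simp add: normalized_call_def algebra_simps)
  also have "\<dots> = (exp x * std_normal_density (- x / s - s / 2)) * mills (- x / s - s / 2)
                  - std_normal_density (s / 2 - x / s) * mills (s / 2 - x / s)"
    by (simp only: Ncdf_minus_eq_mills mult.assoc)
  also have "exp x * std_normal_density (- x / s - s / 2) = exp (x / 2 - x\<^sup>2 / (2 * s\<^sup>2) - s\<^sup>2 / 8) / sqrt (2 * pi)"
    by (rule std_normal_density_at_d(2)[OF assms]) (simp add: power2_eq_square algebra_simps)
  also have "std_normal_density (s / 2 - x / s) = exp (x / 2 - x\<^sup>2 / (2 * s\<^sup>2) - s\<^sup>2 / 8) / sqrt (2 * pi)"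
    by (rule std_normal_density_at_d(1)[OF assms]) (simp add: power2_commute)
  finally show ?thesis using False by (simp add: algebra_simps diff_divide_distrib)
qed

lemma time_value_div_spot:
  assumes "S > 0" "K > 0" "T \<ge> 0"
  shows "(BS S K T \<sigma> - max (S - K) 0) / S = normalized_call (ln (K / S)) (\<sigma> * sqrt T) - max (1 - K / S) 0"
proof -
  have "max (S - K) 0 / S = max (1 - K / S) 0" using assms(1) by (simp add: max_def field_simps)
  thus ?thesis using assms by (simp add: diff_divide_distrib BS_div_spot)
qed

lemma covered_call_div_spot:
  assumes "S > 0" "K > 0" "T \<ge> 0"
  shows "(S - BS S K T \<sigma>) / S = 1 - normalized_call (ln (K / S)) (\<sigma> * sqrt T)"
  using assms by (simp add: diff_divide_distrib BS_div_spot)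

section \<open>Expansions in the total volatility\<close>

lemma mills_approx_difference_pos:
  fixes y :: real assumes "y > 0"
  shows "\<forall>\<^sub>F s in at_right 0. mills_approx4 (y / s - s / 2) - mills_approx3 (y / s + s / 2) > 0"
  using assms unfolding mills_approx3_def mills_approx4_def
  by (real_asymp simp add: field_simps power2_eq_square power_numeral_reduce mult_ac
      less_imp_neq[OF assms, symmetric])

lemma mills_approx_difference_asymp_lower:
  fixes y :: real assumes "y > 0"
  shows "(\<lambda>s. - ln (y\<^sup>2 * (mills_approx4 (y / s - s / 2) - mills_approx3 (y / s + s / 2)) / s ^ 3)
               - 3 * s\<^sup>2 / y\<^sup>2) \<in> O[at_right 0](\<lambda>s. s ^ 4)"
  using assms unfolding mills_approx3_def mills_approx4_def
  by (real_asymp simp add: field_simps power2_eq_square power_numeral_reduce mult_ac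
      less_imp_neq[OF assms, symmetric])

lemma mills_approx_difference_asymp_upper:
  fixes y :: real assumes "y > 0"
  shows "(\<lambda>s. - ln (y\<^sup>2 * (mills_approx3 (y / s - s / 2) - mills_approx4 (y / s + s / 2)) / s ^ 3)
               - 3 * s\<^sup>2 / y\<^sup>2) \<in> O[at_right 0](\<lambda>s. s ^ 4)"
  using assms unfolding mills_approx3_def mills_approx4_def
  by (real_asymp simp add: field_simps power2_eq_square power_numeral_reduce mult_ac
      less_imp_neq[OF assms, symmetric])

lemma mills_approx_sum_asymp_lower:
  "(\<lambda>s. - ln (s * (mills_approx2 (s / 2 - x / s) + mills_approx2 (s / 2 + x / s)) / 4) - 4 / s\<^sup>2)
     \<in> O[at_top](\<lambda>s. 1 / s ^ 4)"
  unfolding mills_approx2_def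
  by (real_asymp simp add: field_simps power2_eq_square power_numeral_reduce mult_ac)

lemma mills_approx_sum_asymp_upper:
  "(\<lambda>s. - ln (s * (mills_approx3 (s / 2 - x / s) + mills_approx3 (s / 2 + x / s)) / 4) - 4 / s\<^sup>2)
     \<in> O[at_top](\<lambda>s. 1 / s ^ 4)"
  unfolding mills_approx3_def
  by (real_asymp simp add: field_simps power2_eq_square power_numeral_reduce mult_ac)

lemma mills_difference_expansion:
  fixes y :: real assumes "y > 0"
  shows "\<forall>\<^sub>F s in at_right 0. mills (y / s - s / 2) - mills (y / s + s / 2) > 0"
    and "(\<lambda>s. - ln (y\<^sup>2 * (mills (y / s - s / 2) - mills (y / s + s / 2)) / s ^ 3) - 3 * s\<^sup>2 / y\<^sup>2)
           \<in> O[at_right 0](\<lambda>s. s ^ 4)"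
proof -
  let ?D = "\<lambda>s. mills (y / s - s / 2) - mills (y / s + s / 2)"
  let ?lo = "\<lambda>s. mills_approx4 (y / s - s / 2) - mills_approx3 (y / s + s / 2)"
  let ?hi = "\<lambda>s. mills_approx3 (y / s - s / 2) - mills_approx4 (y / s + s / 2)"
  have "\<forall>\<^sub>F s in at_right 0. y / s - s / 2 > 0" using assms by real_asymp
  hence bounds: "\<forall>\<^sub>F s in at_right 0. 0 < ?lo s \<and> ?lo s \<le> ?D s \<and> ?D s \<le> ?hi s \<and> s > 0"
    using mills_approx_difference_pos[OF assms] eventually_at_right_less[of 0]
  proof eventually_elim
    case (elim s)
    hence "y / s + s / 2 > 0" by linarith
    with elim show ?case
      using mills_le_approx3 mills_approx4_le by (auto intro: diff_mono)
  qed
  thus "\<forall>\<^sub>F s in at_right 0. ?D s > 0" by eventually_elim auto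
  show "(\<lambda>s. - ln (y\<^sup>2 * ?D s / s ^ 3) - 3 * s\<^sup>2 / y\<^sup>2) \<in> O[at_right 0](\<lambda>s. s ^ 4)"
  proof (rule bigo_sandwich)
    show "\<forall>\<^sub>F s in at_right 0. - ln (y\<^sup>2 * ?hi s / s ^ 3) - 3 * s\<^sup>2 / y\<^sup>2 \<le> - ln (y\<^sup>2 * ?D s / s ^ 3) - 3 * s\<^sup>2 / y\<^sup>2
                \<and> - ln (y\<^sup>2 * ?D s / s ^ 3) - 3 * s\<^sup>2 / y\<^sup>2 \<le> - ln (y\<^sup>2 * ?lo s / s ^ 3) - 3 * s\<^sup>2 / y\<^sup>2"
      using bounds by eventually_elim (use assms in \<open>auto intro!: divide_right_mono mult_left_mono\<close>)
  qed (fact mills_approx_difference_asymp_upper[OF assms] mills_approx_difference_asymp_lower[OF assms])+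
qed

lemma mills_sum_expansion:
  fixes x :: real
  shows "\<forall>\<^sub>F s in at_top. mills (s / 2 - x / s) + mills (s / 2 + x / s) > 0"
    and "(\<lambda>s. - ln (s * (mills (s / 2 - x / s) + mills (s / 2 + x / s)) / 4) - 4 / s\<^sup>2)
           \<in> O[at_top](\<lambda>s. 1 / s ^ 4)"
proof -
  let ?R = "\<lambda>s. mills (s / 2 - x / s) + mills (s / 2 + x / s)"
  let ?lo = "\<lambda>s. mills_approx2 (s / 2 - x / s) + mills_approx2 (s / 2 + x / s)"
  let ?hi = "\<lambda>s. mills_approx3 (s / 2 - x / s) + mills_approx3 (s / 2 + x / s)"
  have "\<forall>\<^sub>F s in at_top. s / 2 - x / s > 0" "\<forall>\<^sub>F s in at_top. s / 2 + x / s > 0"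
    "\<forall>\<^sub>F s in at_top. ?lo s > 0"
    unfolding mills_approx2_def by real_asymp+
  hence bounds: "\<forall>\<^sub>F s in at_top. 0 < ?lo s \<and> ?lo s \<le> ?R s \<and> ?R s \<le> ?hi s \<and> s > 0"
    using eventually_gt_at_top[of 0]
  proof eventually_elim
    case (elim s)
    thus ?case using mills_le_approx3[OF elim(1)] mills_le_approx3[OF elim(2)]
        mills_approx2_le[OF elim(1)] mills_approx2_le[OF elim(2)]
      by (intro conjI add_mono) auto
  qed
  thus "\<forall>\<^sub>F s in at_top. ?R s > 0" by eventually_elim auto
  show "(\<lambda>s. - ln (s * ?R s / 4) - 4 / s\<^sup>2) \<in> O[at_top](\<lambda>s. 1 / s ^ 4)"
  proof (rule bigo_sandwich)
    show "\<forall>\<^sub>F s in at_top. - ln (s * ?hi s / 4) - 4 / s\<^sup>2 \<le> - ln (s * ?R s / 4) - 4 / s\<^sup>2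
                \<and> - ln (s * ?R s / 4) - 4 / s\<^sup>2 \<le> - ln (s * ?lo s / 4) - 4 / s\<^sup>2"
      using bounds by eventually_elim auto
  qed (fact mills_approx_sum_asymp_upper mills_approx_sum_asymp_lower)+
qed

lemma neg_ln_time_value_identity:
  assumes "s > 0" "D > 0" "x \<noteq> 0"
  shows "- ln (exp (x / 2 - x\<^sup>2 / (2 * s\<^sup>2) - s\<^sup>2 / 8) / sqrt (2 * pi) * D)
           = 1 / (2 / x\<^sup>2 * s\<^sup>2) - 3 / 2 * ln (2 / x\<^sup>2 * s\<^sup>2) + ln (4 * sqrt pi * exp (- x / 2) / \<bar>x\<bar>)
             - (- 3 / 2 - x\<^sup>2 / 16) * (2 / x\<^sup>2 * s\<^sup>2) + (- ln (x\<^sup>2 * D / s ^ 3) - 3 * s\<^sup>2 / x\<^sup>2)"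
proof -
  have y: "\<bar>x\<bar> > 0" using assms(3) by simp
  have x2: "ln (x\<^sup>2) = 2 * ln \<bar>x\<bar>" using ln_realpow[of "\<bar>x\<bar>" 2] y by simp
  have "ln (exp (x / 2 - x\<^sup>2 / (2 * s\<^sup>2) - s\<^sup>2 / 8) / sqrt (2 * pi) * D)
          = x / 2 - x\<^sup>2 / (2 * s\<^sup>2) - s\<^sup>2 / 8 - (ln 2 / 2 + ln (sqrt pi)) + ln D"
    using assms(2) by (simp add: ln_mult ln_div real_sqrt_mult ln_sqrt)
  moreover have "ln (x\<^sup>2 * D / s ^ 3) = 2 * ln \<bar>x\<bar> + ln D - 3 * ln s"
    using assms(1,2) y x2 by (simp add: ln_mult ln_div ln_realpow)
  moreover have "ln (2 / x\<^sup>2 * s\<^sup>2) = ln 2 + 2 * ln s - 2 * ln \<bar>x\<bar>"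
    using assms(1) y x2 by (simp add: ln_mult ln_div ln_realpow)
  moreover have "ln (4 * sqrt pi * exp (- x / 2) / \<bar>x\<bar>) = 2 * ln 2 + ln (sqrt pi) - x / 2 - ln \<bar>x\<bar>"
    using y ln_realpow[of 2 2] by (simp add: ln_mult ln_div)
  moreover have "1 / (2 / x\<^sup>2 * s\<^sup>2) = x\<^sup>2 / (2 * s\<^sup>2)"
    and "(- 3 / 2 - x\<^sup>2 / 16) * (2 / x\<^sup>2 * s\<^sup>2) = - (3 * s\<^sup>2 / x\<^sup>2) - s\<^sup>2 / 8"
    using assms(1,3) by (simp_all add: field_simps power2_eq_square)
  ultimately show ?thesis by (simp add: algebra_simps)
qed

lemma neg_ln_covered_call_identity:
  assumes "s > 0" "R > 0"
  shows "- ln (exp (x / 2 - x\<^sup>2 / (2 * s\<^sup>2) - s\<^sup>2 / 8) / sqrt (2 * pi) * R)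
           = s\<^sup>2 / 8 + 1 / 2 * ln (s\<^sup>2 / 8) + ln (sqrt pi * exp (- x / 2))
             - (- 1 / 2 - x\<^sup>2 / 16) / (s\<^sup>2 / 8) + (- ln (s * R / 4) - 4 / s\<^sup>2)"
proof -
  have "ln (exp (x / 2 - x\<^sup>2 / (2 * s\<^sup>2) - s\<^sup>2 / 8) / sqrt (2 * pi) * R)
          = x / 2 - x\<^sup>2 / (2 * s\<^sup>2) - s\<^sup>2 / 8 - (ln 2 / 2 + ln (sqrt pi)) + ln R"
    using assms(2) by (simp add: ln_mult ln_div real_sqrt_mult ln_sqrt)
  moreover have "ln (s * R / 4) = ln s + ln R - 2 * ln 2"
    using assms ln_realpow[of 2 2] by (simp add: ln_mult ln_div)
  moreover have "ln (s\<^sup>2 / 8) = 2 * ln s - 3 * ln 2"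
    using assms(1) ln_realpow[of 2 3] by (simp add: ln_div ln_realpow)
  moreover have "ln (sqrt pi * exp (- x / 2)) = ln (sqrt pi) - x / 2"
    by (simp add: ln_mult)
  moreover have "(- 1 / 2 - x\<^sup>2 / 16) / (s\<^sup>2 / 8) = - (x\<^sup>2 / (2 * s\<^sup>2)) - 4 / s\<^sup>2"
    using assms(1) by (simp add: field_simps power2_eq_square)
  ultimately show ?thesis by (simp add: algebra_simps)
qed

lemma neg_ln_time_value_expansion:
  fixes x :: real assumes "x \<noteq> 0"
  defines "v \<equiv> \<lambda>s. 2 / x\<^sup>2 * s\<^sup>2"
    and "\<gamma> \<equiv> ln (4 * sqrt pi * exp (- x / 2) / \<bar>x\<bar>)" and "\<alpha> \<equiv> - 3 / 2 - x\<^sup>2 / 16"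
  shows "(\<lambda>s. - ln (normalized_call x s - max (1 - exp x) 0)
               - (1 / v s - 3 / 2 * ln (v s) + \<gamma> - \<alpha> * v s)) \<in> O[at_right 0](\<lambda>s. s ^ 4)"
proof -
  let ?D = "\<lambda>s. mills (\<bar>x\<bar> / s - s / 2) - mills (\<bar>x\<bar> / s + s / 2)"
  have y: "\<bar>x\<bar> > 0" using assms(1) by simp
  have "\<forall>\<^sub>F s in at_right 0. - ln (\<bar>x\<bar>\<^sup>2 * ?D s / s ^ 3) - 3 * s\<^sup>2 / \<bar>x\<bar>\<^sup>2
          = - ln (normalized_call x s - max (1 - exp x) 0) - (1 / v s - 3 / 2 * ln (v s) + \<gamma> - \<alpha> * v s)"
    using mills_difference_expansion(1)[OF y] eventually_at_right_less[of 0]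
  proof eventually_elim
    case (elim s)
    thus ?case
      using normalized_time_value_eq[of s x] neg_ln_time_value_identity[of s "?D s" x] assms(1)
      by (simp add: v_def \<gamma>_def \<alpha>_def)
  qed
  thus ?thesis using mills_difference_expansion(2)[OF y] by (simp flip: landau_o.big.in_cong)
qed

lemma neg_ln_covered_call_expansion:
  fixes x :: real
  defines "w \<equiv> \<lambda>s. s\<^sup>2 / 8"
    and "\<gamma> \<equiv> ln (sqrt pi * exp (- x / 2))" and "\<alpha> \<equiv> - 1 / 2 - x\<^sup>2 / 16"
  shows "(\<lambda>s. - ln (1 - normalized_call x s)
               - (w s + 1 / 2 * ln (w s) + \<gamma> - \<alpha> / w s)) \<in> O[at_top](\<lambda>s. 1 / s ^ 4)"
proof -
  let ?R = "\<lambda>s. mills (s / 2 - x / s) + mills (s / 2 + x / s)"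
  have "\<forall>\<^sub>F s in at_top. - ln (s * ?R s / 4) - 4 / s\<^sup>2
          = - ln (1 - normalized_call x s) - (w s + 1 / 2 * ln (w s) + \<gamma> - \<alpha> / w s)"
    using mills_sum_expansion(1)[of x] eventually_gt_at_top[of 0]
  proof eventually_elim
    case (elim s)
    thus ?case
      using one_minus_normalized_call_eq[of s x] neg_ln_covered_call_identity[of s "?R s" x]
      by (simp add: w_def \<gamma>_def \<alpha>_def)
  qed
  thus ?thesis using mills_sum_expansion(2)[of x] by (simp flip: landau_o.big.in_cong)
qed

lemma short_expiry_total_variance:
  fixes x :: real assumes "x \<noteq> 0"
  defines "v \<equiv> \<lambda>s. 2 / x\<^sup>2 * s\<^sup>2"
    and "lam \<equiv> \<lambda>s. - 1 / ln (normalized_call x s - max (1 - exp x) 0)"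
    and "\<gamma> \<equiv> ln (4 * sqrt pi * exp (- x / 2) / \<bar>x\<bar>)" and "\<alpha> \<equiv> - 3 / 2 - x\<^sup>2 / 16"
  shows "(\<lambda>s. v s - short_expiry_series \<gamma> \<alpha> (lam s)) \<in> o[at_right 0](\<lambda>s. lam s ^ 3)"
proof -
  define E where "E s = - ln (normalized_call x s - max (1 - exp x) 0)
                          - (1 / v s - 3 / 2 * ln (v s) + \<gamma> - \<alpha> * v s)" for s
  have lam: "lam = (\<lambda>s. 1 / (1 / v s - 3 / 2 * ln (v s) + \<gamma> - \<alpha> * v s + E s))"
    by (simp add: lam_def E_def fun_eq_iff)
  have "x\<^sup>2 > 0" using assms(1) by simp
  hence v: "filterlim v (at_right 0) (at_right 0)" and s4: "(\<lambda>s. s ^ 4) \<in> O[at_right 0](\<lambda>s. (v s)\<^sup>2)"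
    unfolding v_def by real_asymp+
  have E: "E \<in> O[at_right 0](\<lambda>s. (v s)\<^sup>2)"
    using neg_ln_time_value_expansion[OF assms(1)] s4 unfolding E_def[abs_def] v_def \<gamma>_def \<alpha>_def
    by (rule landau_o.big_trans)
  note inverts = short_expiry_series_inverts_perturbed[where \<gamma> = \<gamma> and \<alpha> = \<alpha>, OF v E]
  have "(\<lambda>s. v s ^ 3) \<in> \<Theta>[at_right 0](\<lambda>s. lam s ^ 3)"
    using inverts(2) unfolding lam[symmetric] by (rule asymp_equiv_imp_bigtheta[OF asymp_equiv_power[OF asymp_equiv_symI]])
  with inverts(1) have "(\<lambda>s. short_expiry_series \<gamma> \<alpha> (lam s) - v s) \<in> o[at_right 0](\<lambda>s. lam s ^ 3)"
    by (simp add: lam landau_o.small.cong_bigtheta)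
  thus ?thesis using landau_o.small.uminus_in_iff by fastforce
qed

lemma long_expiry_total_variance:
  fixes x :: real
  defines "w \<equiv> \<lambda>s. s\<^sup>2 / 8"
    and "lam \<equiv> \<lambda>s. - 1 / ln (1 - normalized_call x s)"
    and "\<gamma> \<equiv> ln (sqrt pi * exp (- x / 2))" and "\<alpha> \<equiv> - 1 / 2 - x\<^sup>2 / 16"
  shows "(\<lambda>s. w s * lam s - long_expiry_series \<gamma> \<alpha> (lam s)) \<in> o[at_top](\<lambda>s. (lam s)\<^sup>2)"
    and "lam \<sim>[at_top] (\<lambda>s. 1 / w s)"
proof -
  define E where "E s = - ln (1 - normalized_call x s) - (w s + 1 / 2 * ln (w s) + \<gamma> - \<alpha> / w s)" for s
  have lam: "lam = (\<lambda>s. 1 / (w s + 1 / 2 * ln (w s) + \<gamma> - \<alpha> / w s + E s))"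
    by (simp add: lam_def E_def fun_eq_iff)
  have w: "filterlim w at_top at_top" and s4: "(\<lambda>s. 1 / s ^ 4) \<in> O[at_top](\<lambda>s. 1 / (w s)\<^sup>2)"
    unfolding w_def by real_asymp+
  have E: "E \<in> O[at_top](\<lambda>s. 1 / (w s)\<^sup>2)"
    using neg_ln_covered_call_expansion[of x] s4 unfolding E_def[abs_def] w_def \<gamma>_def \<alpha>_def
    by (rule landau_o.big_trans)
  note inverts = long_expiry_series_inverts_perturbed[where \<gamma> = \<gamma> and \<alpha> = \<alpha>, OF w E]
  show lam_equiv: "lam \<sim>[at_top] (\<lambda>s. 1 / w s)" using inverts(2) unfolding lam .
  have "(\<lambda>s. (1 / w s)\<^sup>2) \<in> \<Theta>[at_top](\<lambda>s. (lam s)\<^sup>2)"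
    using lam_equiv by (rule asymp_equiv_imp_bigtheta[OF asymp_equiv_power[OF asymp_equiv_symI]])
  with inverts(1) show "(\<lambda>s. w s * lam s - long_expiry_series \<gamma> \<alpha> (lam s)) \<in> o[at_top](\<lambda>s. (lam s)\<^sup>2)"
    by (simp add: lam landau_o.small.cong_bigtheta power_one_over)
qed

section \<open>Expansions in the maturity\<close>

lemma short_expiry_implied_variance:
  fixes S K x :: real and sig C :: "real \<Rightarrow> real"
  assumes "S > 0" "K > 0" "K \<noteq> S" "\<forall>T>0. sig T > 0" "\<forall>T>0. C T = BS S K T (sig T)"
    and "((\<lambda>T. sig T * sqrt T) \<longlongrightarrow> 0) (at_right 0)" and x: "x = ln (K / S)"
  defines "lam \<equiv> \<lambda>T. - 1 / ln ((C T - max (S - K) 0) / S)"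
    and "\<gamma> \<equiv> ln (4 * sqrt pi * exp (- x / 2) / \<bar>x\<bar>)" and "\<alpha> \<equiv> - 3 / 2 - x\<^sup>2 / 16"
  shows "\<exists>r. r \<in> o[at_right 0](\<lambda>T. lam T ^ 3) \<and>
           (\<forall>\<^sub>F T in at_right 0. (sig T)\<^sup>2 * T = x\<^sup>2 / 2 * (short_expiry_series \<gamma> \<alpha> (lam T) + r T))"
proof -
  define s where "s T = sig T * sqrt T" for T
  define r where "r T = 2 / x\<^sup>2 * ((sig T)\<^sup>2 * T) - short_expiry_series \<gamma> \<alpha> (lam T)" for T
  have "x \<noteq> 0" using assms(1-3) by (simp add: x)
  have s_lim: "filterlim s (at_right 0) (at_right 0)"
  proof (unfold filterlim_at, intro conjI)
    show "\<forall>\<^sub>F T in at_right 0. s T \<in> {0<..} \<and> s T \<noteq> 0"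
      using eventually_at_right_less[of 0]
    proof eventually_elim
      case (elim T)
      with assms(4) have "sig T > 0" by simp
      with elim show ?case by (simp add: s_def)
    qed
    show "(s \<longlongrightarrow> 0) (at_right 0)" using assms(6) by (simp add: s_def[abs_def])
  qed
  let ?lam = "\<lambda>s. - 1 / ln (normalized_call x s - max (1 - exp x) 0)"
  have "\<forall>\<^sub>F T in at_right 0. ?lam (s T) = lam T \<and> (s T)\<^sup>2 = (sig T)\<^sup>2 * T"
    using eventually_at_right_less[of 0]
  proof eventually_elim
    case (elim T)
    thus ?case using assms(1,2,5) time_value_div_spot[of S K T "sig T"]
      by (simp add: lam_def s_def x power_mult_distrib)
  qed
  hence "\<forall>\<^sub>F T in at_right 0. 2 / x\<^sup>2 * (s T)\<^sup>2 - short_expiry_series \<gamma> \<alpha> (?lam (s T)) = r T"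
    and "\<forall>\<^sub>F T in at_right 0. ?lam (s T) ^ 3 = lam T ^ 3"
    by (elim eventually_mono, simp only: r_def)+
  from landau_o.small.in_cong[OF this(1)] landau_o.small.cong[OF this(2)]
    landau_o.small.compose[OF short_expiry_total_variance[OF \<open>x \<noteq> 0\<close>, folded \<gamma>_def \<alpha>_def] s_lim]
  have "r \<in> o[at_right 0](\<lambda>T. lam T ^ 3)" by simp
  moreover have "(sig T)\<^sup>2 * T = x\<^sup>2 / 2 * (short_expiry_series \<gamma> \<alpha> (lam T) + r T)" for T
    using \<open>x \<noteq> 0\<close> by (simp add: r_def)
  ultimately show ?thesis by (blast intro: always_eventually)
qed

lemma long_expiry_total_vol_asymp_equiv:
  fixes x :: real
  shows "(\<lambda>s. s) \<sim>[at_top] (\<lambda>s. sqrt (- 8 * ln (1 - normalized_call x s)))"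
proof -
  have "(\<lambda>s. 8 * inverse (- 1 / ln (1 - normalized_call x s))) \<sim>[at_top] (\<lambda>s. 8 * inverse (1 / (s\<^sup>2 / 8)))"
    by (intro asymp_equiv_mult asymp_equiv_refl asymp_equiv_inverse long_expiry_total_variance(2))
  hence equiv: "(\<lambda>s. - 8 * ln (1 - normalized_call x s)) \<sim>[at_top] (\<lambda>s. s\<^sup>2)" by simp
  have "\<forall>\<^sub>F s in at_top. (s::real)\<^sup>2 > 0" by real_asymp
  with asymp_equiv_eventually_pos_iff[OF equiv]
  have "\<forall>\<^sub>F s in at_top. - 8 * ln (1 - normalized_call x s) > 0" by eventually_elim blast
  hence "(\<lambda>s. (- 8 * ln (1 - normalized_call x s)) powr (1 / 2)) \<sim>[at_top] (\<lambda>s. (s\<^sup>2) powr (1 / 2))"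
    by (intro asymp_equiv_powr_real[OF equiv]) (auto elim!: eventually_mono)
  moreover have "\<forall>\<^sub>F s in at_top. (- 8 * ln (1 - normalized_call x s)) powr (1 / 2)
                    = sqrt (- 8 * ln (1 - normalized_call x s))"
    using \<open>\<forall>\<^sub>F s in at_top. - 8 * ln (1 - normalized_call x s) > 0\<close>
    by eventually_elim (simp add: powr_half_sqrt)
  moreover have "\<forall>\<^sub>F s in at_top. ((s::real)\<^sup>2) powr (1 / 2) = s"
    using eventually_gt_at_top[of 0] by eventually_elim (simp add: powr_half_sqrt)
  ultimately show ?thesis by (simp add: asymp_equiv_cong asymp_equiv_sym)
qed

lemma long_expiry_implied_variance:
  fixes S K x :: real and sig C :: "real \<Rightarrow> real"
  assumes "S > 0" "K > 0" "\<forall>T>0. C T = BS S K T (sig T)"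
    and s_lim: "filterlim (\<lambda>T. sig T * sqrt T) at_top at_top" and x: "x = ln (K / S)"
  defines "lam \<equiv> \<lambda>T. - 1 / ln ((S - C T) / S)"
    and "\<gamma> \<equiv> ln (sqrt pi * exp (- x / 2))" and "\<alpha> \<equiv> - 1 / 2 - x\<^sup>2 / 16"
  shows "\<exists>r. r \<in> o[at_top](\<lambda>T. (lam T)\<^sup>2) \<and>
           (\<forall>\<^sub>F T in at_top. (sig T)\<^sup>2 * T = 8 / lam T * (long_expiry_series \<gamma> \<alpha> (lam T) + r T))"
proof -
  define r where "r T = (sig T)\<^sup>2 * T / 8 * lam T - long_expiry_series \<gamma> \<alpha> (lam T)" for T
  let ?lam = "\<lambda>s. - 1 / ln (1 - normalized_call x s)"
  have ev: "\<forall>\<^sub>F T in at_top. lam T = ?lam (sig T * sqrt T) \<and> (sig T * sqrt T)\<^sup>2 = (sig T)\<^sup>2 * T"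
    using eventually_gt_at_top[of 0]
    by eventually_elim (use assms(1-3) covered_call_div_spot in \<open>simp add: lam_def x power_mult_distrib\<close>)
  hence "\<forall>\<^sub>F T in at_top. (sig T * sqrt T)\<^sup>2 / 8 * ?lam (sig T * sqrt T)
                            - long_expiry_series \<gamma> \<alpha> (?lam (sig T * sqrt T)) = r T"
    and "\<forall>\<^sub>F T in at_top. (?lam (sig T * sqrt T))\<^sup>2 = (lam T)\<^sup>2"
    by (elim eventually_mono, simp only: r_def)+
  from landau_o.small.in_cong[OF this(1)] landau_o.small.cong[OF this(2)]
    landau_o.small.compose[OF long_expiry_total_variance(1)[of x, folded \<gamma>_def \<alpha>_def] s_lim]
  have "r \<in> o[at_top](\<lambda>T. (lam T)\<^sup>2)" by simp
  moreover have "\<forall>\<^sub>F T in at_top. lam T > 0"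
  proof -
    have "\<forall>\<^sub>F s in at_top. 1 / ((s::real)\<^sup>2 / 8) > 0" by real_asymp
    with asymp_equiv_eventually_pos_iff[OF long_expiry_total_variance(2)[of x]]
    have "\<forall>\<^sub>F s in at_top. ?lam s > 0" by eventually_elim blast
    from eventually_compose_filterlim[OF this s_lim] ev show ?thesis by eventually_elim simp
  qed
  hence "\<forall>\<^sub>F T in at_top. (sig T)\<^sup>2 * T = 8 / lam T * (long_expiry_series \<gamma> \<alpha> (lam T) + r T)"
    by eventually_elim (simp add: r_def)
  ultimately show ?thesis by blast
qed

lemma long_expiry_implied_vol_asymp_equiv:
  fixes S K :: real and sig C :: "real \<Rightarrow> real"
  assumes "S > 0" "K > 0" "\<forall>T>0. C T = BS S K T (sig T)"
    and s_lim: "filterlim (\<lambda>T. sig T * sqrt T) at_top at_top"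
  shows "sig \<sim>[at_top] (\<lambda>T. 2 * sqrt (- 2 * ln ((S - C T) / S) / T))"
proof -
  let ?s = "\<lambda>T. sig T * sqrt T"
  have "(\<lambda>T. ?s T / sqrt T) \<sim>[at_top]
          (\<lambda>T. sqrt (- 8 * ln (1 - normalized_call (ln (K / S)) (?s T))) / sqrt T)"
    by (intro asymp_equiv_intros asymp_equiv_compose'[OF long_expiry_total_vol_asymp_equiv s_lim])
  moreover have "\<forall>\<^sub>F T in at_top. ?s T / sqrt T = sig T"
    using eventually_gt_at_top[of 0] by eventually_elim simp
  moreover have "\<forall>\<^sub>F T in at_top. sqrt (- 8 * ln (1 - normalized_call (ln (K / S)) (?s T))) / sqrt T
                    = 2 * sqrt (- 2 * ln ((S - C T) / S) / T)"
    using eventually_gt_at_top[of 0]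
  proof eventually_elim
    case (elim T)
    hence "1 - normalized_call (ln (K / S)) (?s T) = (S - C T) / S"
      using assms(1-3) covered_call_div_spot by simp
    moreover have "sqrt (- 8 * a) = 2 * sqrt (- 2 * a)" for a :: real
      using real_sqrt_mult[of 4 "- 2 * a"] by simp
    ultimately show ?case unfolding real_sqrt_divide by simp
  qed
  ultimately show ?thesis by (simp add: asymp_equiv_cong)
qed

theorem proposition5:
  fixes S K :: real and sig C :: "real \<Rightarrow> real"
  assumes S_pos: "S > 0" and K_pos: "K > 0" and KS: "K \<noteq> S"
    and sig_pos: "\<forall>T>0. sig T > 0"
    and C_def: "\<forall>T>0. C T = BS S K T (sig T)"
  defines "x \<equiv> ln (K / S)"
  shows
   "(((\<lambda>T. sig T * sqrt T) \<longlongrightarrow> 0) (at_right 0) \<longrightarrow>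
      (let TV = (\<lambda>T. C T - max (S - K) 0);
           lam = (\<lambda>T. - 1 / ln (TV T / S));
           \<gamma> = ln (4 * sqrt pi * exp (- x / 2) / \<bar>x\<bar>);
           \<alpha>\<^sub>1 = - 3 / 2 - x\<^sup>2 / 16
       in \<exists>r. r \<in> o[at_right 0](\<lambda>T. lam T ^ 3) \<and>
          (\<forall>\<^sub>F T in at_right 0. (sig T)\<^sup>2 * T = x\<^sup>2 / 2 *
             (lam T - 3 / 2 * (lam T)\<^sup>2 * ln (lam T) + \<gamma> * (lam T)\<^sup>2
              + 9 / 4 * lam T ^ 3 * (ln (lam T))\<^sup>2
              + (9 / 4 - 3 * \<gamma>) * lam T ^ 3 * ln (lam T)
              + (\<gamma>\<^sup>2 - 3 / 2 * \<gamma> - \<alpha>\<^sub>1) * lam T ^ 3 + r T))))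
    \<and>
    (filterlim (\<lambda>T. sig T * sqrt T) at_top at_top \<longrightarrow>
      (let CC = (\<lambda>T. S - C T);
           lam = (\<lambda>T. - 1 / ln (CC T / S));
           \<gamma> = ln (sqrt pi * exp (- x / 2));
           \<alpha>\<^sub>1 = - 1 / 2 - x\<^sup>2 / 16
       in (\<exists>r. r \<in> o[at_top](\<lambda>T. (lam T)\<^sup>2) \<and>
            (\<forall>\<^sub>F T in at_top. (sig T)\<^sup>2 * T = 8 / lam T *
               (1 + 1 / 2 * lam T * ln (lam T) - \<gamma> * lam T
                - 1 / 4 * (lam T)\<^sup>2 * ln (lam T)
                + (\<gamma> / 2 + \<alpha>\<^sub>1) * (lam T)\<^sup>2 + r T)))
          \<and> sig \<sim>[at_top] (\<lambda>T. 2 * sqrt (- 2 * ln (CC T / S) / T))))"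
proof -
  have x: "x = ln (K / S)" by (simp add: x_def)
  note short = short_expiry_implied_variance[OF S_pos K_pos KS sig_pos C_def _ x]
  note long = long_expiry_implied_variance[OF S_pos K_pos C_def _ x]
    long_expiry_implied_vol_asymp_equiv[OF S_pos K_pos C_def]
  show ?thesis
    unfolding Let_def short_expiry_series_def[symmetric] long_expiry_series_def[symmetric]
    using short long by blast
qed

end
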